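(* Let $q=2^n$ with $n\ge 2$. Then at most $\phi(\phi(q))+2$ of the numbers in the set $\{H_{a/q}: 1\le a\le q\}$ are linearly independent over $\overline{\mathbb{Q}}$; that is, the $\overline{\mathbb{Q}}$-linear span of this set has dimension at most $\phi(\phi(q))+2$.
   Context: $\phi$ is Euler's totient function and $\overline{\mathbb{Q}}$ is the field of algebraic numbers. For a complex number $r$ which is not a negative integer, $H_r=r\sum_{k=1}^{\infty}\frac{1}{k(r+k)}$; for $1\le a\le q$ it satisfies Gauss's formula $H_{a/q}=\frac qa-\log(2q)-\frac{\pi}{2}\cot(\pi a/q)+2\sum_{n=1}^{\lfloor (q-1)/2\rfloor}\cos(2\pi n a/q)\log\sin(\pi n/q)$. *)

theory Defs
  imports "HOL-Analysis.Analysis" "HOL-Computational_Algebra.Polynomial" "HOL-Number_Theory.Number_Theory"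
begin

definition harmH :: "complex \<Rightarrow> complex" where
  "harmH r = r * (\<Sum>k. 1 / (of_nat (Suc k) * (r + of_nat (Suc k))))"

definition alg_independent :: "complex set \<Rightarrow> bool" where
  "alg_independent S \<longleftrightarrow> finite S \<and>
     (\<forall>c :: complex \<Rightarrow> complex. (\<forall>x\<in>S. algebraic (c x)) \<longrightarrow>
        (\<Sum>x\<in>S. c x * x) = 0 \<longrightarrow> (\<forall>x\<in>S. c x = 0))"

end

theory Submission
  imports Defs
begin

text \<open>
  Write \<open>\<psi>\<close> for the digamma function and \<open>K = \<rat>(\<zeta>\<^sub>q)\<close>.  Since
  \<open>H\<^sub>r = \<psi>(r + 1) + \<gamma> = \<psi>(r) + \<gamma> + 1/r\<close>, it suffices to place every \<open>\<psi>(b/q) + \<gamma>\<close>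
  in the \<open>K\<close>-span of \<open>1\<close>, \<open>\<pi>\<close> and the \<open>q/4 = \<phi>(\<phi>(q))\<close> values \<open>\<psi>(d/q) + \<gamma>\<close> with
  \<open>d < q/2\<close> odd.  The reflection formula \<open>\<psi>(1 - x) - \<psi>(x) = \<pi> cot(\<pi> x)\<close>, with
  \<open>cot(\<pi> d/q) \<in> K\<close>, handles odd \<open>d > q/2\<close>; the duplication formula
  \<open>\<psi>(x) + \<psi>(x + 1/2) = 2 \<psi>(2x) - 2 log 2\<close> handles even numerators by induction on
  their 2-adic valuation, provided \<open>log 2\<close> lies in the span; and it does, because summing
  the duplication formula over all numerators (Gauss) makes the sum over odd \<open>b\<close> a
  nonzero rational multiple of \<open>log 2\<close>.  Finally \<open>K\<close> is a finite-dimensional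
  \<open>\<rat>\<close>-algebra of algebraic numbers, so a set that is linearly independent over the
  algebraic numbers and lies in the \<open>K\<close>-span of \<open>B\<close> has at most \<open>|B|\<close> elements.
\<close>

lemma harmH_eq_Digamma:
  assumes "Re r \<ge> 0"
  shows "harmH r = Digamma (r + 1) + euler_mascheroni"
proof (cases "r = 0")
  case True
  then show ?thesis by (simp add: harmH_def)
next
  case False
  have term_eq: "inverse (of_nat (Suc k)) - inverse (r + 1 + of_nat k)
      = r * (1 / (of_nat (Suc k) * (r + of_nat (Suc k))))" for k
  proof -
    have "r + of_nat (Suc k) \<noteq> 0" using assms by (auto simp: complex_eq_iff)
    moreover have "r + 1 + of_nat k = r + of_nat (Suc k)" by simp
    ultimately show ?thesis by (simp only:) (simp add: field_simps del: of_nat_Suc)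
  qed
  have "r + 1 \<noteq> 0" using assms by (auto simp: complex_eq_iff)
  from summable_Digamma[OF this]
  have "summable (\<lambda>k. 1 / (of_nat (Suc k) * (r + of_nat (Suc k))))"
    unfolding term_eq using False summable_cmult_iff by blast
  then have "(\<Sum>k. r * (1 / (of_nat (Suc k) * (r + of_nat (Suc k))))) = harmH r"
    unfolding harmH_def by (rule suminf_mult)
  then show ?thesis unfolding Digamma_def term_eq by simp
qed

lemma Digamma_reflection:
  fixes z :: complex
  assumes "z \<notin> \<int>"
  shows "Digamma (1 - z) - Digamma z = of_real pi * cot (of_real pi * z)"
proof -
  define g where "g t = Gamma t * Gamma (1 - t) * sin (of_real pi * t)" for t :: complex
  have z_poles: "z \<notin> \<int>\<^sub>\<le>\<^sub>0" "1 - z \<notin> \<int>\<^sub>\<le>\<^sub>0"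
    using assms Ints_diff[of 1 "1 - z"] nonpos_Ints_subset_Ints by auto
  have sin_nz: "sin (of_real pi * t) \<noteq> 0" if "t \<notin> \<int>" for t :: complex
    using that by (subst sin_eq_0) auto
  have "eventually (\<lambda>t. t \<in> - \<int>) (nhds z)"
    using assms by (intro eventually_nhds_in_open) auto
  then have "eventually (\<lambda>t. g t = of_real pi) (nhds z)"
    by eventually_elim (use Gamma_reflection_complex sin_nz in \<open>simp add: g_def\<close>)
  then have g_const: "(g has_field_derivative 0) (at z)"
    by (subst DERIV_cong_ev[OF refl _ refl]) (auto intro: DERIV_const)
  have "(g has_field_derivative Gamma z * Gamma (1 - z) *
      ((Digamma z - Digamma (1 - z)) * sin (of_real pi * z) + of_real pi * cos (of_real pi * z))) (at z)"
    unfolding g_def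
    by (rule derivative_eq_intros refl z_poles | simp add: z_poles)+ (simp add: algebra_simps)
  from DERIV_unique[OF this g_const] z_poles
  have "(Digamma z - Digamma (1 - z)) * sin (of_real pi * z) + of_real pi * cos (of_real pi * z) = 0"
    by (simp add: Gamma_nonzero)
  with sin_nz[OF assms] show ?thesis
    by (simp add: cot_def eq_divide_eq algebra_simps)
qed

lemma Digamma_duplication:
  fixes z :: complex
  assumes "Re z > 0"
  shows "Digamma z + Digamma (z + 1/2) = 2 * Digamma (2 * z) - 2 * of_real (ln 2)"
proof -
  define c where "c t = exp ((1 - 2 * t) * of_real (ln 2)) * of_real (sqrt pi)" for t :: complex
  define f where "f t = Gamma t * Gamma (t + 1/2) - c t * Gamma (2 * t)" for t :: complex
  have no_pole: "t \<notin> \<int>\<^sub>\<le>\<^sub>0" if "Re t > 0" for t :: complex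
    using that by (auto elim!: nonpos_Ints_cases')
  have z_poles: "z \<notin> \<int>\<^sub>\<le>\<^sub>0" "z + 1/2 \<notin> \<int>\<^sub>\<le>\<^sub>0" "2 * z \<notin> \<int>\<^sub>\<le>\<^sub>0"
    using assms by (auto intro!: no_pole)
  have "eventually (\<lambda>t. t \<in> {t. Re t > 0}) (nhds z)"
    using assms by (intro eventually_nhds_in_open) (auto simp: open_halfspace_Re_gt)
  then have "eventually (\<lambda>t. f t = 0) (nhds z)"
  proof eventually_elim
    case (elim t)
    then have "t \<notin> \<int>\<^sub>\<le>\<^sub>0" "t + 1/2 \<notin> \<int>\<^sub>\<le>\<^sub>0" by (auto intro!: no_pole)
    then show ?case using Gamma_legendre_duplication[of t] by (simp add: f_def c_def)
  qed
  then have f_const: "(f has_field_derivative 0) (at z)"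
    by (subst DERIV_cong_ev[OF refl _ refl]) (auto intro: DERIV_const)
  have "(f has_field_derivative Gamma z * Digamma z * Gamma (z + 1/2) + Gamma z * (Gamma (z + 1/2) * Digamma (z + 1/2))
      - (c z * (-2 * of_real (ln 2)) * Gamma (2 * z) + c z * (Gamma (2 * z) * Digamma (2 * z) * 2))) (at z)"
    unfolding f_def c_def using z_poles by (auto intro!: derivative_eq_intros simp: algebra_simps)
  from DERIV_unique[OF this f_const]
  have "Gamma z * Gamma (z + 1/2) * (Digamma z + Digamma (z + 1/2))
      = c z * Gamma (2 * z) * (2 * Digamma (2 * z) - 2 * of_real (ln 2))"
    by (simp add: algebra_simps)
  also have "c z * Gamma (2 * z) = Gamma z * Gamma (z + 1/2)"
    using Gamma_legendre_duplication[OF z_poles(1,2)] by (simp add: c_def)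
  finally show ?thesis using z_poles by (simp add: Gamma_nonzero)
qed

definition rat_scale :: "rat \<Rightarrow> complex \<Rightarrow> complex" where
  "rat_scale r z = of_rat r * z"

interpretation Q: vector_space rat_scale
  by unfold_locales (auto simp: rat_scale_def algebra_simps of_rat_add of_rat_mult)

lemma Q_span_of_rat_mult: "x \<in> Q.span S \<Longrightarrow> of_rat r * x \<in> Q.span S"
  using Q.span_scale[of x S r] by (simp add: rat_scale_def)

lemma Q_span_of_nat_mult: "x \<in> Q.span S \<Longrightarrow> of_nat k * x \<in> Q.span S"
  using Q_span_of_rat_mult[of x S "of_nat k"] by simp

lemma module_hom_mult_left: "module_hom rat_scale rat_scale (\<lambda>x. c * x)"
  by (simp add: module_hom_iff Q.module_axioms rat_scale_def algebra_simps)

lemma Q_span_mult_left: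
  assumes "\<And>a. a \<in> A \<Longrightarrow> c * a \<in> Q.span B" and "x \<in> Q.span A"
  shows "c * x \<in> Q.span B"
proof -
  have "c * x \<in> Q.span ((\<lambda>a. c * a) ` A)"
    using module_hom.span_image[OF module_hom_mult_left] assms(2) by blast
  also have "\<dots> \<subseteq> Q.span B"
    using assms(1) by (intro Q.span_minimal) auto
  finally show ?thesis .
qed

lemma Q_span_mult_span_times:
  assumes "E * E \<subseteq> E" and "a \<in> Q.span E" and "x \<in> Q.span (E * X)"
  shows "a * x \<in> Q.span (E * X)"
proof -
  have "e * x \<in> Q.span (E * X)" if "e \<in> E" for e
  proof (rule Q_span_mult_left[OF _ assms(3)])
    fix y assume "y \<in> E * X"
    then obtain e' x' where "y = e' * x'" "e' \<in> E" "x' \<in> X" by (auto elim: set_times_elim)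
    with that assms(1) have "e * y \<in> E * X" by (auto simp: mult.assoc[symmetric])
    then show "e * y \<in> Q.span (E * X)" by (rule Q.span_base)
  qed
  then show ?thesis
    using Q_span_mult_left[of E x "E * X" a] assms(2) by (simp add: mult.commute)
qed

lemma Q_span_mult_closed:
  assumes "E * E \<subseteq> E" and "1 \<in> E" and "a \<in> Q.span E" and "b \<in> Q.span E"
  shows "a * b \<in> Q.span E"
proof -
  have "E * {1} = E" by (auto simp: set_times_def)
  with Q_span_mult_span_times[OF assms(1,3), of b "{1}"] assms(4) show ?thesis by simp
qed

lemma algebraicI_rat_combination:
  fixes a :: complex
  assumes "(\<Sum>k\<le>N. of_rat (u k) * a ^ k) = 0" and "k \<le> N" and "u k \<noteq> 0"
  shows "algebraic a"
proof -
  define p :: "complex poly" where "p = (\<Sum>k\<le>N. Polynomial.monom (of_rat (u k)) k)"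
  have coeff_p: "Polynomial.coeff p k = (if k \<le> N then of_rat (u k) else 0)" for k
    by (simp add: p_def Polynomial.coeff_sum coeff_monom)
  show ?thesis
  proof (rule algebraicI'[of p])
    show "Polynomial.coeff p i \<in> \<rat>" for i by (simp add: coeff_p)
    show "p \<noteq> 0" using assms(2,3) coeff_p[of k] by auto
    show "Polynomial.poly p a = 0" using assms(1) by (simp add: p_def Polynomial.poly_sum poly_monom)
  qed
qed

lemma algebraic_if_powers_in_span:
  fixes a :: complex
  assumes "finite E" and "\<And>k. a ^ k \<in> Q.span E"
  shows "algebraic a"
proof (cases "inj_on (\<lambda>k. a ^ k) {..card E}")
  case False
  then obtain i j where ij: "i < j" "j \<le> card E" "a ^ i = a ^ j"
    by (auto simp: inj_on_def) (metis linorder_neqE_nat)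
  define u :: "nat \<Rightarrow> rat" where "u k = (if k = j then 1 else if k = i then - 1 else 0)" for k
  have "(\<Sum>k\<le>card E. of_rat (u k) * a ^ k)
      = (\<Sum>k\<le>card E. (if k = j then a ^ j else 0) - (if k = i then a ^ i else 0))"
    using ij(1) by (intro sum.cong) (auto simp: u_def)
  also have "\<dots> = 0" using ij by (simp add: sum_subtractf)
  finally show ?thesis
    using ij by (intro algebraicI_rat_combination[where u = u and k = j]) (auto simp: u_def)
next
  case True
  define P where "P = (\<lambda>k. a ^ k) ` {..card E}"
  have "card P = card E + 1" unfolding P_def using True by (simp add: card_image)
  then have "Q.dependent P"
    using Q.independent_span_bound[OF assms(1), of P] assms(2) by (auto simp: P_def)
  then obtain u v where u: "(\<Sum>v\<in>P. rat_scale (u v) v) = 0" "v \<in> P" "u v \<noteq> 0"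
    using Q.dependent_finite[of P] unfolding P_def by auto
  from u(2,3) obtain k where "k \<le> card E" "u (a ^ k) \<noteq> 0" unfolding P_def by auto
  moreover have "(\<Sum>k\<le>card E. of_rat (u (a ^ k)) * a ^ k) = 0"
    using u(1) True unfolding P_def by (simp add: sum.reindex rat_scale_def)
  ultimately show ?thesis by (intro algebraicI_rat_combination[of "\<lambda>k. u (a ^ k)"])
qed

lemma algebraic_if_in_span_of_monoid:
  assumes "finite E" and "1 \<in> E" and "E * E \<subseteq> E" and "a \<in> Q.span E"
  shows "algebraic a"
proof (rule algebraic_if_powers_in_span[OF assms(1)])
  show "a ^ k \<in> Q.span E" for k
  proof (induction k)
    case 0
    then show ?case using assms(2) by (simp add: Q.span_base)
  next
    case (Suc k)
    then show ?case using Q_span_mult_closed[OF assms(3,2,4)] by simp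
  qed
qed

lemma alg_independentD:
  assumes "alg_independent S" and "\<And>x. x \<in> S \<Longrightarrow> algebraic (c x)"
    and "(\<Sum>x\<in>S. c x * x) = 0" and "x \<in> S"
  shows "c x = 0"
  using assms unfolding alg_independent_def by blast

lemma zero_notin_alg_independent:
  assumes "alg_independent S"
  shows "0 \<notin> S"
proof
  assume "0 \<in> S"
  define c :: "complex \<Rightarrow> complex" where "c x = (if x = 0 then 1 else 0)" for x
  have "(\<Sum>x\<in>S. c x * x) = 0" by (intro sum.neutral) (auto simp: c_def)
  with assms \<open>0 \<in> S\<close> have "c 0 = 0"
    by (intro alg_independentD[where S = S and c = c]) (auto simp: c_def rat_imp_algebraic)
  then show False by (simp add: c_def)
qed

lemma inj_on_times_alg_independent:
  assumes "Q.independent E" and "\<And>x. x \<in> E \<Longrightarrow> algebraic x" and "alg_independent S"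
  shows "inj_on (\<lambda>(e, s). e * s) (E \<times> S)"
proof (rule inj_onI, clarify)
  fix e s e' s' assume mem: "e \<in> E" "s \<in> S" "e' \<in> E" "s' \<in> S" and eq: "e * s = e' * s'"
  have "0 \<notin> E" using assms(1) Q.dependent_zero by blast
  have "0 \<notin> S" using zero_notin_alg_independent[OF assms(3)] .
  have "finite S" using assms(3) unfolding alg_independent_def by blast
  show "e = e' \<and> s = s'"
  proof (cases "s = s'")
    case True
    with eq mem(2) \<open>0 \<notin> S\<close> show ?thesis by fastforce
  next
    case False
    define c :: "complex \<Rightarrow> complex" where
      "c x = (if x = s then e else if x = s' then - e' else 0)" for x
    have "(\<Sum>x\<in>S. c x * x) = (\<Sum>x\<in>S. (if x = s then e * s else 0) - (if x = s' then e' * s' else 0))"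
      by (intro sum.cong) (auto simp: c_def False)
    also have "\<dots> = e * s - e' * s'"
      using mem(2,4) \<open>finite S\<close> by (simp only: sum_subtractf sum.delta if_True)
    also have "\<dots> = 0" using eq by simp
    finally have sum0: "(\<Sum>x\<in>S. c x * x) = 0" .
    have "algebraic (c x)" for x
      using assms(2) mem by (auto simp: c_def algebraic_minus)
    with sum0 mem(2) have "c s = 0" using alg_independentD[OF assms(3), where c = c] by blast
    with \<open>e \<in> E\<close> \<open>0 \<notin> E\<close> show ?thesis by (simp add: c_def)
  qed
qed

lemma independent_times_alg_independent:
  assumes E: "Q.independent E" "finite E" and E_alg: "\<And>x. x \<in> Q.span E \<Longrightarrow> algebraic x"
    and S: "alg_independent S"
  shows "Q.independent (E * S)"
proof -
  have inj: "inj_on (\<lambda>(e, s). e * s) (E \<times> S)"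
    using inj_on_times_alg_independent[OF E(1) _ S] E_alg Q.span_base by blast
  have "finite S" using S unfolding alg_independent_def by blast
  then have fin: "finite (E * S)" using E(2) by (simp add: finite_set_times)
  show ?thesis
  proof (rule Q.independent_if_scalars_zero[OF fin])
    fix f y assume sum0: "(\<Sum>y\<in>E * S. rat_scale (f y) y) = 0" and "y \<in> E * S"
    from \<open>y \<in> E * S\<close> obtain e s where y: "y = e * s" "e \<in> E" "s \<in> S"
      by (rule set_times_elim)
    define c where "c s = (\<Sum>e\<in>E. of_rat (f (e * s)) * e)" for s
    have "(\<Sum>s\<in>S. c s * s) = (\<Sum>s\<in>S. \<Sum>e\<in>E. of_rat (f (e * s)) * (e * s))"
      by (simp add: c_def sum_distrib_right mult.assoc)
    also have "\<dots> = (\<Sum>(e, s)\<in>E \<times> S. of_rat (f (e * s)) * (e * s))"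
      by (subst sum.swap) (simp add: sum.cartesian_product)
    also have "\<dots> = (\<Sum>y\<in>E * S. rat_scale (f y) y)"
      unfolding set_times_image using inj by (simp add: sum.reindex case_prod_unfold rat_scale_def)
    finally have "(\<Sum>s\<in>S. c s * s) = 0" using sum0 by simp
    moreover have "algebraic (c s)" for s
      unfolding c_def by (intro E_alg Q.span_sum Q_span_of_rat_mult Q.span_base)
    ultimately have "c s = 0" using y(3) alg_independentD[OF S, where c = c] by blast
    then have "(\<Sum>e\<in>E. rat_scale (f (e * s)) e) = 0" by (simp add: c_def rat_scale_def)
    then show "f y = 0"
      using Q.independentD[OF E(1) E(2) order_refl, of "\<lambda>e. f (e * s)" e] y by simp
  qed
qed

lemma card_set_times_le: "finite A \<Longrightarrow> finite B \<Longrightarrow> card (A * B) \<le> card A * card B"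
  unfolding set_times_image by (metis card_cartesian_product card_image_le finite_cartesian_product)

text \<open>
  For a \<open>\<rat>\<close>-basis \<open>E'\<close> of \<open>span E\<close>, the products \<open>E' * S\<close> are \<open>\<rat>\<close>-independent and
  lie in the \<open>\<rat>\<close>-span of \<open>E' * B\<close>, so \<open>|E'| |S| \<le> |E'| |B|\<close>.
\<close>

lemma card_alg_independent_le:
  assumes E: "finite E" "1 \<in> E" "E * E \<subseteq> E" and "finite B"
    and S: "alg_independent S" "S \<subseteq> Q.span (E * B)"
  shows "card S \<le> card B"
proof -
  obtain E' where E': "E' \<subseteq> E" "Q.independent E'" "E \<subseteq> Q.span E'"
    by (rule Q.maximal_independent_subset)
  have "finite E'" using E'(1) E(1) finite_subset by blast
  have span_E': "Q.span E' = Q.span E"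
    using E'(1,3) by (simp add: Q.span_eq Q.span_superset subset_trans)
  have alg: "algebraic x" if "x \<in> Q.span E'" for x
    using algebraic_if_in_span_of_monoid[OF E] span_E' that by blast
  have "E' \<noteq> {}"
  proof
    assume "E' = {}"
    then have "Q.span E = {0}" using span_E' by simp
    with Q.span_base[OF E(2)] show False by simp
  qed
  have "Q.span (E * B) \<subseteq> Q.span (E' * B)"
  proof (rule Q.span_minimal)
    show "E * B \<subseteq> Q.span (E' * B)"
    proof
      fix y assume "y \<in> E * B"
      then obtain e b where y: "y = e * b" "e \<in> E" "b \<in> B" by (auto elim: set_times_elim)
      have "b * e \<in> Q.span (E' * B)"
      proof (rule Q_span_mult_left)
        show "e \<in> Q.span E'" using E'(3) y(2) by blast
        show "b * a \<in> Q.span (E' * B)" if "a \<in> E'" for a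
          using set_times_intro[OF that y(3)] by (simp add: mult.commute Q.span_base)
      qed
      then show "y \<in> Q.span (E' * B)" using y(1) by (simp add: mult.commute)
    qed
  qed simp
  moreover have "E' * S \<subseteq> Q.span (E * B)"
  proof
    fix y assume "y \<in> E' * S"
    then obtain e s where "y = e * s" "e \<in> E'" "s \<in> S" by (auto elim: set_times_elim)
    then show "y \<in> Q.span (E * B)"
      using E'(1) S(2) Q_span_mult_span_times[OF E(3), of e s B] by (auto intro: Q.span_base)
  qed
  moreover have "Q.independent (E' * S)"
    using independent_times_alg_independent[OF E'(2) \<open>finite E'\<close> alg S(1)] .
  ultimately have "card (E' * S) \<le> card (E' * B)"
    using Q.independent_span_bound \<open>finite E'\<close> \<open>finite B\<close> by (simp add: finite_set_times)
  also have "\<dots> \<le> card E' * card B" using \<open>finite E'\<close> \<open>finite B\<close> by (rule card_set_times_le)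
  also have "card (E' * S) = card E' * card S"
  proof -
    have "inj_on (\<lambda>(e, s). e * s) (E' \<times> S)"
      using inj_on_times_alg_independent[OF E'(2) _ S(1)] alg Q.span_base by blast
    then show ?thesis unfolding set_times_image by (simp add: card_image card_cartesian_product)
  qed
  finally show ?thesis using \<open>E' \<noteq> {}\<close> \<open>finite E'\<close> by (simp add: card_gt_0_iff)
qed

definition roots_of_unity :: "nat \<Rightarrow> complex set" where
  "roots_of_unity q = {z. z ^ q = 1}"

lemma finite_roots_of_unity: "0 < q \<Longrightarrow> finite (roots_of_unity q)"
  by (simp add: roots_of_unity_def finite_roots_unity)

lemma one_in_roots_of_unity: "1 \<in> roots_of_unity q"
  by (simp add: roots_of_unity_def)

lemma roots_of_unity_times: "roots_of_unity q * roots_of_unity q \<subseteq> roots_of_unity q"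
  by (auto simp: roots_of_unity_def power_mult_distrib elim!: set_times_elim)

lemma ii_in_roots_of_unity: "4 dvd q \<Longrightarrow> \<i> \<in> roots_of_unity q"
  by (auto simp: roots_of_unity_def power_mult)

lemma geometric_weighted_sum_root_of_unity:
  fixes w :: complex
  assumes "w ^ q = 1" and "w \<noteq> 1"
  shows "(w - 1) * (\<Sum>k<q. of_nat k * w ^ k) = of_nat q"
proof -
  have "(w - 1) * (\<Sum>k<q. of_nat k * w ^ k) = of_nat q * w ^ q - w * (\<Sum>k<q. w ^ k)"
    by (induction q) (simp_all add: algebra_simps)
  moreover have "(\<Sum>k<q. w ^ k) = 0"
    using power_diff_1_eq[of w q] assms by simp
  ultimately show ?thesis using assms(1) by simp
qed

lemma exp_two_ii_minus_one: "exp (2 * \<i> * x) - 1 = 2 * \<i> * exp (\<i> * x) * sin x"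
  and exp_two_ii_plus_one: "exp (2 * \<i> * x) + 1 = 2 * exp (\<i> * x) * cos x"
proof -
  have "exp (2 * \<i> * x) = exp (\<i> * x) * exp (\<i> * x)" by (simp add: exp_add[symmetric] mult.assoc)
  moreover have "exp (\<i> * x) * exp (- (\<i> * x)) = 1" by (simp add: exp_minus)
  ultimately show "exp (2 * \<i> * x) - 1 = 2 * \<i> * exp (\<i> * x) * sin x"
    and "exp (2 * \<i> * x) + 1 = 2 * exp (\<i> * x) * cos x"
    unfolding sin_exp_eq cos_exp_eq by (simp_all add: field_simps)
qed

lemma cot_in_span_roots_of_unity:
  assumes "4 dvd q" and "0 < d" and "d < q"
  shows "cot (of_real pi * (of_nat d / of_nat q)) \<in> Q.span (roots_of_unity q)"
proof -
  define x :: complex where "x = of_real pi * (of_nat d / of_nat q)"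
  define w where "w = exp (2 * \<i> * x)"
  define T where "T = (\<Sum>k<q. of_nat k * w ^ k)"
  have "sin (pi * d / q) > 0"
    using assms(2,3) by (intro sin_gt_zero) (auto simp: field_simps)
  moreover have "sin x = of_real (sin (pi * d / q))"
    unfolding x_def by (simp flip: sin_of_real)
  ultimately have "sin x \<noteq> 0" by simp
  then have "w - 1 \<noteq> 0" by (simp add: w_def exp_two_ii_minus_one)
  have "w ^ q = 1"
  proof -
    have "w ^ q = exp (of_nat d * (2 * of_real pi * \<i>))"
      using assms(3) by (simp add: w_def x_def exp_of_nat_mult[symmetric] field_simps)
    also have "\<dots> = 1" by (simp add: exp_of_nat_mult)
    finally show ?thesis .
  qed
  have "cot x = \<i> * (w + 1) / (w - 1)"
    using \<open>sin x \<noteq> 0\<close> by (simp add: cot_def w_def exp_two_ii_minus_one exp_two_ii_plus_one)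
  also have "\<dots> = of_rat (1 / of_nat q) * (\<i> * (w + 1) * T)"
  proof -
    have "(w - 1) * T = of_nat q"
      unfolding T_def using \<open>w ^ q = 1\<close> \<open>w - 1 \<noteq> 0\<close>
      by (simp add: geometric_weighted_sum_root_of_unity)
    then have "inverse (w - 1) = T / of_nat q"
      using \<open>w - 1 \<noteq> 0\<close> assms(3) by (auto simp: field_simps)
    then show ?thesis by (simp add: divide_inverse of_rat_inverse ac_simps)
  qed
  finally have cot_x: "cot x = of_rat (1 / of_nat q) * (\<i> * (w + 1) * T)" .
  let ?K = "Q.span (roots_of_unity q)"
  have power_w: "w ^ k \<in> ?K" for k
    using \<open>w ^ q = 1\<close>
    by (intro Q.span_base) (simp add: roots_of_unity_def power_mult[symmetric] mult.commute[of k] power_mult)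
  have "\<i> \<in> ?K" using ii_in_roots_of_unity[OF assms(1)] by (rule Q.span_base)
  moreover have "w + 1 \<in> ?K" using power_w[of 1] power_w[of 0] by (simp add: Q.span_add)
  moreover have "T \<in> ?K" unfolding T_def by (intro Q.span_sum Q_span_of_nat_mult power_w)
  ultimately have "\<i> * (w + 1) * T \<in> ?K"
    by (intro Q_span_mult_closed[OF roots_of_unity_times one_in_roots_of_unity])
  then show ?thesis using cot_x Q_span_of_rat_mult unfolding x_def by metis
qed

definition digamma_frac :: "nat \<Rightarrow> nat \<Rightarrow> complex" where
  "digamma_frac N b = Digamma (of_nat b / of_nat N) + euler_mascheroni"

lemma digamma_frac_self: "0 < N \<Longrightarrow> digamma_frac N N = 0"
  by (simp add: digamma_frac_def)

lemma digamma_frac_double [simp]: "digamma_frac (2 * N) (2 * b) = digamma_frac N b"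
  by (simp add: digamma_frac_def)

lemma harmH_eq_digamma_frac:
  assumes "0 < N" and "0 < b"
  shows "harmH (of_nat b / of_nat N) = digamma_frac N b + of_nat N / of_nat b"
proof -
  have "of_nat b / of_nat N \<noteq> (0 :: complex)" using assms by simp
  then show ?thesis
    using harmH_eq_Digamma[of "of_nat b / of_nat N"] Digamma_plus1[of "of_nat b / of_nat N"]
    by (simp add: digamma_frac_def)
qed

lemma digamma_frac_reflection:
  assumes "0 < d" and "d < N"
  shows "digamma_frac N (N - d) = digamma_frac N d + of_real pi * cot (of_real pi * (of_nat d / of_nat N))"
proof -
  define z :: complex where "z = of_nat d / of_nat N"
  have "\<not> int N dvd int d" using assms by (auto dest: zdvd_imp_le)
  then have "z \<notin> \<int>" using fraction_not_in_Ints[of "int N" "int d"] assms by (simp add: z_def)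
  have "of_nat (N - d) / of_nat N = 1 - z" using assms by (simp add: z_def field_simps of_nat_diff)
  then have "digamma_frac N (N - d) = Digamma (1 - z) + euler_mascheroni"
    by (simp add: digamma_frac_def)
  also have "\<dots> = digamma_frac N d + of_real pi * cot (of_real pi * z)"
    using Digamma_reflection[OF \<open>z \<notin> \<int>\<close>] by (simp add: digamma_frac_def z_def algebra_simps)
  finally show ?thesis by (simp add: z_def)
qed

lemma digamma_frac_duplication:
  assumes "0 < N" and "0 < c"
  shows "digamma_frac (2 * N) c + digamma_frac (2 * N) (c + N) = 2 * digamma_frac N c - 2 * of_real (ln 2)"
proof -
  define z :: complex where "z = of_nat c / of_nat (2 * N)"
  have "z + 1/2 = of_nat (c + N) / of_nat (2 * N)" and "2 * z = of_nat c / of_nat N"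
    using assms by (simp_all add: z_def field_simps)
  with Digamma_duplication[of z] assms show ?thesis
    by (simp add: digamma_frac_def z_def algebra_simps)
qed

lemma sum_digamma_frac_power_two:
  "(\<Sum>b=1..2 ^ k. digamma_frac (2 ^ k) b) = - of_nat (k * 2 ^ k) * of_real (ln 2)"
proof (induction k)
  case 0
  show ?case by (simp add: digamma_frac_self)
next
  case (Suc k)
  let ?N = "2 ^ k :: nat"
  have "{1..2 * ?N} = {1..?N} \<union> {1 + ?N..?N + ?N}" by auto
  then have "(\<Sum>b=1..2 * ?N. digamma_frac (2 * ?N) b)
      = (\<Sum>b=1..?N. digamma_frac (2 * ?N) b) + (\<Sum>b=1 + ?N..?N + ?N. digamma_frac (2 * ?N) b)"
    by (simp only: sum.union_disjoint[symmetric]) (auto intro: sum.union_disjoint)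
  also have "\<dots> = (\<Sum>b=1..?N. digamma_frac (2 * ?N) b + digamma_frac (2 * ?N) (b + ?N))"
    by (simp only: sum.shift_bounds_cl_nat_ivl sum.distrib)
  also have "\<dots> = (\<Sum>b=1..?N. 2 * digamma_frac ?N b - 2 * of_real (ln 2))"
    by (intro sum.cong refl digamma_frac_duplication) auto
  also have "\<dots> = 2 * (\<Sum>b=1..?N. digamma_frac ?N b) - 2 * of_nat ?N * of_real (ln 2)"
    by (simp add: sum_subtractf sum_distrib_left)
  also have "\<dots> = - of_nat (Suc k * 2 ^ Suc k) * of_real (ln 2)"
    unfolding Suc.IH by (simp add: algebra_simps)
  finally show ?case by simp
qed

lemma sum_odd_digamma_frac_power_two:
  "(\<Sum>b | b < 2 ^ Suc k \<and> odd b. digamma_frac (2 ^ Suc k) b) = - of_nat ((k + 2) * 2 ^ k) * of_real (ln 2)"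
proof -
  let ?N = "2 ^ k :: nat"
  let ?Odd = "{b. b < 2 * ?N \<and> odd b}"
  have "{1..2 * ?N} = ?Odd \<union> (\<lambda>c. 2 * c) ` {1..?N}"
  proof (intro Set.set_eqI iffI)
    fix b assume "b \<in> {1..2 * ?N}"
    then show "b \<in> ?Odd \<union> (\<lambda>c. 2 * c) ` {1..?N}"
      by (cases "even b") (auto elim!: evenE intro: le_neq_implies_less)
  qed (auto simp: Suc_le_eq odd_pos)
  moreover have "?Odd \<inter> (\<lambda>c. 2 * c) ` {1..?N} = {}" by auto
  ultimately have split: "(\<Sum>b=1..2 * ?N. digamma_frac (2 * ?N) b)
      = (\<Sum>b\<in>?Odd. digamma_frac (2 * ?N) b) + (\<Sum>c=1..?N. digamma_frac ?N c)"
    by (simp add: sum.union_disjoint sum.reindex inj_on_def)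
  have "(\<Sum>b\<in>?Odd. digamma_frac (2 * ?N) b)
      = (\<Sum>b=1..2 * ?N. digamma_frac (2 * ?N) b) - (\<Sum>c=1..?N. digamma_frac ?N c)"
    by (simp only: split add_diff_cancel_right')
  also have "\<dots> = - of_nat (Suc k * (2 * ?N)) * of_real (ln 2) + of_nat (k * ?N) * of_real (ln 2)"
    using sum_digamma_frac_power_two[of "Suc k"] sum_digamma_frac_power_two[of k] by simp
  also have "\<dots> = - of_nat ((k + 2) * ?N) * of_real (ln 2)"
    by (simp add: algebra_simps)
  finally show ?thesis by simp
qed

lemma sum_odd_reflect:
  fixes f :: "nat \<Rightarrow> 'a :: comm_monoid_add"
  shows "(\<Sum>b | b < 4 * m \<and> odd b. f b) = (\<Sum>d | d < 2 * m \<and> odd d. f d + f (4 * m - d))"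
proof -
  let ?L = "{d. d < 2 * m \<and> odd d}"
  have odd_reflect: "odd (4 * m - b)" if "odd b" "b < 4 * m" for b
    using that by (auto elim!: oddE)
  have "{b. b < 4 * m \<and> odd b} = ?L \<union> (\<lambda>d. 4 * m - d) ` ?L"
  proof (intro Set.set_eqI iffI)
    fix b assume b: "b \<in> {b. b < 4 * m \<and> odd b}"
    show "b \<in> ?L \<union> (\<lambda>d. 4 * m - d) ` ?L"
    proof (cases "b < 2 * m")
      case False
      with b have "b \<noteq> 2 * m" by auto
      with False b have "4 * m - b \<in> ?L" "b = 4 * m - (4 * m - b)" by (auto intro: odd_reflect)
      then show ?thesis by blast
    qed (use b in auto)
  qed (auto intro: odd_reflect dest: odd_pos)
  moreover have "?L \<inter> (\<lambda>d. 4 * m - d) ` ?L = {}" by auto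
  moreover have "inj_on (\<lambda>d. 4 * m - d) ?L" by (auto simp: inj_on_def)
  ultimately show ?thesis by (simp add: sum.union_disjoint sum.reindex sum.distrib)
qed

lemma power_two_times_odd_decomposition:
  assumes "0 < b"
  obtains j d :: nat where "odd d" and "b = 2 ^ j * d"
  using assms
proof (induction b arbitrary: thesis rule: less_induct)
  case (less b)
  show ?case
  proof (cases "odd b")
    case True
    then show ?thesis using less.prems(1)[of b 0] by simp
  next
    case False
    then obtain c where "b = 2 * c" by (auto elim: evenE)
    with less.prems(2) have "0 < c" "c < b" by auto
    then show ?thesis
      using less.IH[of c] less.prems(1) \<open>b = 2 * c\<close> by (metis mult.assoc power_Suc)
  qed
qed

locale dyadic_denominator =
  fixes n m q :: nat
  assumes two_le_n: "2 \<le> n" and q_eq: "q = 2 ^ n" and m_eq: "m = 2 ^ (n - 2)"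
begin

lemma q_eq_4m: "q = 4 * m"
proof -
  obtain k where "n = k + 2" using two_le_n by (metis add.commute le_Suc_ex)
  then show ?thesis by (simp add: q_eq m_eq power_add)
qed

lemma m_pos: "0 < m"
  by (simp add: m_eq)

lemma q_pos: "0 < q"
  by (simp add: q_eq)

abbreviation psi :: "nat \<Rightarrow> complex" where
  "psi \<equiv> digamma_frac q"

definition odd_residues :: "nat set" where
  "odd_residues = {d. d < 2 * m \<and> odd d}"

definition generators :: "complex set" where
  "generators = {1, of_real pi} \<union> psi ` odd_residues"

text \<open>The \<open>\<rat>\<close>-span of the products with \<open>q\<close>-th roots of unity is the \<open>\<rat>(\<zeta>\<^sub>q)\<close>-span.\<close>

abbreviation V :: "complex set" where
  "V \<equiv> Q.span (roots_of_unity q * generators)"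

lemma generator_in_V: "x \<in> generators \<Longrightarrow> x \<in> V"
  using set_times_intro[OF one_in_roots_of_unity] by (auto intro: Q.span_base)

lemma pi_cot_in_V:
  assumes "0 < d" and "d < q"
  shows "of_real pi * cot (of_real pi * (of_nat d / of_nat q)) \<in> V"
proof -
  have "cot (of_real pi * (of_nat d / of_nat q)) \<in> Q.span (roots_of_unity q)"
    using assms q_eq_4m by (intro cot_in_span_roots_of_unity) auto
  moreover have "of_real pi \<in> V" by (intro generator_in_V) (simp add: generators_def)
  ultimately show ?thesis
    using Q_span_mult_span_times[OF roots_of_unity_times] by (metis mult.commute)
qed

lemma psi_reflection_in_V:
  assumes "0 < d" and "d < q" and "psi d \<in> V"
  shows "psi (q - d) \<in> V"
  using digamma_frac_reflection[OF assms(1,2)] Q.span_add[OF assms(3) pi_cot_in_V[OF assms(1,2)]]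
  by simp

lemma ln_2_in_V: "of_real (ln 2) \<in> V"
proof -
  obtain k where n: "n = Suc (Suc k)" using two_le_n by (metis add_2_eq_Suc le_Suc_ex)
  have q: "q = 2 ^ Suc (n - 1)" "q = 4 * m" using n q_eq q_eq_4m by auto
  define N where "N = (n + 1) * 2 ^ (n - 1)"
  have "0 < N" by (simp add: N_def)
  \<comment> \<open>pairing \<open>b\<close> with \<open>q - b\<close> in the sum over odd \<open>b < q\<close>, a rational multiple of \<open>ln 2\<close>\<close>
  define s where "s = (\<Sum>d\<in>odd_residues. 2 * psi d + of_real pi * cot (of_real pi * (of_nat d / of_nat q)))"
  have "s = (\<Sum>b | b < q \<and> odd b. psi b)"
    unfolding s_def odd_residues_def q(2) sum_odd_reflect
    by (intro sum.cong refl) (simp add: digamma_frac_reflection m_pos odd_pos)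
  also have "\<dots> = - of_nat N * of_real (ln 2)"
    using sum_odd_digamma_frac_power_two[of "n - 1"] n q(1) by (simp add: N_def)
  finally have "of_real (ln 2) = of_rat (- 1 / of_nat N) * s"
    using \<open>0 < N\<close> by (simp add: of_rat_divide of_rat_minus field_simps)
  moreover have "s \<in> V"
    unfolding s_def
  proof (intro Q.span_sum Q.span_add)
    fix d assume d: "d \<in> odd_residues"
    then have "psi d \<in> V" by (intro generator_in_V) (simp add: generators_def)
    then show "2 * psi d \<in> V" using Q_span_of_nat_mult[of "psi d" _ 2] by simp
    show "of_real pi * cot (of_real pi * (of_nat d / of_nat q)) \<in> V"
      using d q(2) by (intro pi_cot_in_V) (auto simp: odd_residues_def odd_pos)
  qed
  ultimately show ?thesis by (simp add: Q_span_of_rat_mult)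
qed

lemma psi_odd_in_V:
  assumes "odd d" and "d \<le> q"
  shows "psi d \<in> V"
proof (cases "d < 2 * m")
  case True
  with assms(1) show ?thesis by (intro generator_in_V) (simp add: generators_def odd_residues_def)
next
  case False
  with assms q_eq_4m have "d \<noteq> 2 * m" "d \<noteq> q" by auto
  with False assms q_eq_4m have "q - d \<in> odd_residues" "0 < q - d" "q - d < q"
    by (auto simp: odd_residues_def odd_pos)
  then have "psi (q - (q - d)) \<in> V"
    by (intro psi_reflection_in_V generator_in_V) (auto simp: generators_def)
  with assms(2) show ?thesis by simp
qed

lemma psi_double:
  assumes "0 < c"
  shows "psi (2 * c) = of_rat (1/2) * (psi c + psi (c + 2 * m) + 2 * of_real (ln 2))"
proof -
  have "psi (2 * c) = digamma_frac (2 * m) c"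
    using q_eq_4m digamma_frac_double[of "2 * m" c] by simp
  moreover have "psi c + psi (c + 2 * m) = 2 * digamma_frac (2 * m) c - 2 * of_real (ln 2)"
    using digamma_frac_duplication[of "2 * m" c] m_pos assms q_eq_4m by (simp add: mult.assoc)
  ultimately show ?thesis by (simp add: of_rat_divide field_simps)
qed

lemma psi_power_two_times_odd_in_V:
  assumes "odd d" and "2 ^ j * d \<le> q"
  shows "psi (2 ^ j * d) \<in> V"
  using assms
proof (induction j arbitrary: d)
  case 0
  then show ?case using psi_odd_in_V by simp
next
  case (Suc j)
  define c where "c = 2 ^ j * d"
  show ?case
  proof (cases "2 ^ Suc j * d = q")
    case True
    then have "psi (2 ^ Suc j * d) = 0" using q_pos by (simp add: digamma_frac_self)
    then show ?thesis by (simp add: Q.span_zero)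
  next
    case False
    have "2 * c \<le> q" "2 * c \<noteq> q" using Suc.prems(2) False by (simp_all add: c_def mult.assoc)
    with q_eq_4m have "c < 2 * m" by linarith
    have "0 < c" using Suc.prems(1) by (simp add: c_def odd_pos)
    have "(2::nat) ^ Suc j \<le> 2 ^ Suc j * d" using odd_pos[OF Suc.prems(1)] by simp
    also have "\<dots> < 2 ^ n" using Suc.prems(2) False q_eq by simp
    finally have "Suc j < n" using power_less_imp_less_exp[of "2::nat" "Suc j" n] by simp
    define e :: nat where "e = 2 ^ (n - 1 - j)"
    have "even e" using \<open>Suc j < n\<close> by (simp add: e_def)
    have "2 * m = 2 ^ j * e"
      using \<open>Suc j < n\<close> two_le_n
      by (simp add: e_def m_eq power_add[symmetric] flip: power_Suc)
    \<comment> \<open>\<open>c\<close> and \<open>c + q/2\<close> both have 2-adic valuation \<open>j\<close>\<close>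
    then have c_shift: "c + 2 * m = 2 ^ j * (d + e)" by (simp add: c_def algebra_simps)
    have "psi c \<in> V" using Suc.IH[OF Suc.prems(1)] \<open>c < 2 * m\<close> q_eq_4m by (simp add: c_def)
    moreover have "psi (c + 2 * m) \<in> V"
      unfolding c_shift using Suc.IH[of "d + e"] Suc.prems(1) \<open>even e\<close> c_shift
        \<open>c < 2 * m\<close> q_eq_4m
      by simp
    moreover have "psi (2 ^ Suc j * d) = psi (2 * c)" by (simp add: c_def mult.assoc)
    ultimately show ?thesis
      using psi_double[OF \<open>0 < c\<close>] Q_span_of_nat_mult[OF ln_2_in_V, of 2]
      by (simp add: Q.span_add Q_span_of_rat_mult)
  qed
qed

lemma psi_in_V:
  assumes "0 < b" and "b \<le> q"
  shows "psi b \<in> V"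
  using power_two_times_odd_decomposition[OF assms(1)] psi_power_two_times_odd_in_V assms(2) by metis

lemma harmH_in_V:
  assumes "0 < b" and "b \<le> q"
  shows "harmH (of_nat b / of_nat q) \<in> V"
proof -
  have harmH_eq: "harmH (of_nat b / of_nat q) = psi b + of_rat (of_nat q / of_nat b) * 1"
    using harmH_eq_digamma_frac[OF q_pos assms(1)] by (simp add: of_rat_divide)
  have "1 \<in> V" by (intro generator_in_V) (simp add: generators_def)
  then show ?thesis
    unfolding harmH_eq by (rule Q.span_add[OF psi_in_V[OF assms] Q_span_of_rat_mult])
qed

lemma card_odd_residues: "card odd_residues = m"
proof -
  have "odd_residues = (\<lambda>k. 2 * k + 1) ` {..<m}"
    by (auto simp: odd_residues_def elim!: oddE)
  moreover have "inj_on (\<lambda>k. 2 * k + 1 :: nat) {..<m}" by (simp add: inj_on_def)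
  ultimately show ?thesis by (simp add: card_image)
qed

lemma card_generators_le: "card generators \<le> m + 2"
proof -
  have "finite odd_residues" by (simp add: odd_residues_def)
  then have "card generators \<le> card {1, complex_of_real pi} + card (psi ` odd_residues)"
    unfolding generators_def by (intro card_Un_le)
  also have "\<dots> \<le> 2 + m"
    using card_image_le[OF \<open>finite odd_residues\<close>, of psi] card_odd_residues
    by (simp add: card_insert_if)
  finally show ?thesis by simp
qed

lemma card_alg_independent_harmH_le:
  assumes "S \<subseteq> {harmH (of_nat a / of_nat q) | a. a \<in> {1..q}}" and "alg_independent S"
  shows "card S \<le> m + 2"
proof -
  have "S \<subseteq> V" using assms(1) harmH_in_V by auto
  moreover have "finite generators" by (simp add: generators_def odd_residues_def)
  ultimately have "card S \<le> card generators"
    using q_eq_4m m_pos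
    by (intro card_alg_independent_le[OF finite_roots_of_unity one_in_roots_of_unity
          roots_of_unity_times _ assms(2)]) auto
  with card_generators_le show ?thesis by simp
qed

end

lemma totient_totient_power_two:
  assumes "2 \<le> n"
  shows "totient (totient (2 ^ n)) = 2 ^ (n - 2)"
  using assms totient_prime_power[of 2 n] totient_prime_power[of 2 "n - 1"] by (simp add: diff_diff_add)

theorem theorem3p5:
  fixes n q :: nat
  assumes "n \<ge> 2" and "q = 2 ^ n"
  shows "\<forall>S. S \<subseteq> {harmH (of_nat a / of_nat q) | a. a \<in> {1..q}} \<and> alg_independent S
           \<longrightarrow> card S \<le> totient (totient q) + 2"
proof (intro allI impI, elim conjE)
  fix S assume "S \<subseteq> {harmH (of_nat a / of_nat q) | a. a \<in> {1..q}}" and "alg_independent S"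
  interpret dyadic_denominator n "2 ^ (n - 2)" q using assms by unfold_locales auto
  show "card S \<le> totient (totient q) + 2"
    using card_alg_independent_harmH_le[OF \<open>S \<subseteq> _\<close> \<open>alg_independent S\<close>]
      totient_totient_power_two[OF assms(1)] assms(2) by simp
qed

end
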